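(* Let $\mathscr D=(V,\mathscr B)$ be a symmetric $(v,k,\lambda)$ design with $k<v$. If $X$ is any $k$-subset of $V$, then there exists a block $B\in\mathscr B$ with $|B\cap X|\geq \lambda+1$.
   Context: A symmetric $(v,k,\lambda)$ design is a $2$-$(v,k,\lambda)$ design $(V,\mathscr B)$ (a set $V$ of $v$ points and a collection $\mathscr B$ of $k$-subsets of $V$, called blocks, such that every pair of distinct points lies in exactly $\lambda$ blocks) having exactly as many blocks as points; consequently every point lies in exactly $k$ blocks and $\lambda(v-1)=k(k-1)$. *)

theory Defs
  imports Main "HOL-Library.Multiset"
begin

definition two_design :: "'a set \<Rightarrow> 'a set multiset \<Rightarrow> nat \<Rightarrow> nat \<Rightarrow> nat \<Rightarrow> bool" where
  "two_design V \<B> v k lam \<longleftrightarrow>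
     finite V \<and> card V = v \<and> 2 \<le> v \<and> 1 \<le> lam \<and>
     (\<forall>B \<in># \<B>. B \<subseteq> V \<and> card B = k) \<and>
     (\<forall>x\<in>V. \<forall>y\<in>V. x \<noteq> y \<longrightarrow> size (filter_mset (\<lambda>B. x \<in> B \<and> y \<in> B) \<B>) = lam)"

definition symmetric_design :: "'a set \<Rightarrow> 'a set multiset \<Rightarrow> nat \<Rightarrow> nat \<Rightarrow> nat \<Rightarrow> bool" where
  "symmetric_design V \<B> v k lam \<longleftrightarrow> two_design V \<B> v k lam \<and> size \<B> = v"

end

theory Submission
  imports Defs
begin

text \<open>Count the incidences of the points of X, and of the ordered pairs of distinct points
  of X, with the blocks: since every point lies in k blocks and every pair in lam blocks,
  the intersection sizes c_B = |B \<inter> X| satisfy \<Sum> c_B = k^2 and \<Sum> c_B (c_B - 1) = lam k (k - 1).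
  If every c_B were at most lam, the second sum would be at most (lam - 1) k^2, forcing
  k \<le> lam; but lam (v - 1) = k (k - 1) and k < v give lam < k.\<close>

lemma sum_mset_card_Int_eq_sum_size_filter:
  assumes "finite T"
  shows "(\<Sum>B\<in>#M. card (g B \<inter> T)) = (\<Sum>t\<in>T. size (filter_mset (\<lambda>B. t \<in> g B) M))"
proof (induction M)
  case empty
  then show ?case by simp
next
  case (add B M)
  have "card (g B \<inter> T) = (\<Sum>t\<in>T. if t \<in> g B then 1 else 0)"
    using assms by (simp add: sum.If_cases Int_commute)
  moreover have "(\<Sum>t\<in>T. size (filter_mset (\<lambda>B'. t \<in> g B') (add_mset B M)))
      = (\<Sum>t\<in>T. (if t \<in> g B then 1 else 0) + size (filter_mset (\<lambda>B'. t \<in> g B') M))"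
    by (rule sum.cong) auto
  ultimately show ?case
    using add by (simp add: sum.distrib)
qed

lemma card_off_diagonal:
  assumes "finite A"
  shows "card {p \<in> A \<times> A. fst p \<noteq> snd p} = card A * (card A - 1)"
proof -
  have "{p \<in> A \<times> A. fst p \<noteq> snd p} = A \<times> A - (\<lambda>x. (x, x)) ` A"
    by auto
  moreover have "card (A \<times> A - (\<lambda>x. (x, x)) ` A) = card (A \<times> A) - card ((\<lambda>x. (x, x)) ` A)"
    using assms by (intro card_Diff_subset) auto
  moreover have "card ((\<lambda>x. (x, x)) ` A) = card A"
    by (rule card_image) (auto simp: inj_on_def)
  ultimately show ?thesis
    by (simp add: card_cartesian_product diff_mult_distrib2)
qed

lemma sum_mset_pairs_le:
  fixes f :: "'b \<Rightarrow> nat"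
  assumes "\<And>x. x \<in># M \<Longrightarrow> f x \<le> c"
  shows "(\<Sum>x\<in>#M. f x * (f x - 1)) \<le> (\<Sum>x\<in>#M. f x) * (c - 1)"
proof -
  have "(\<Sum>x\<in>#M. f x * (f x - 1)) \<le> (\<Sum>x\<in>#M. f x * (c - 1))"
    by (rule sum_mset_mono) (use assms in \<open>auto intro: mult_le_mono2 diff_le_mono\<close>)
  then show ?thesis
    by (simp add: sum_mset_distrib_right)
qed

lemma two_design_points_nonempty:
  assumes "two_design V \<B> v k lam"
  shows "V \<noteq> {}"
  using assms by (auto simp: two_design_def)

lemma two_design_replication:
  assumes "two_design V \<B> v k lam" and "x \<in> V"
  shows "size (filter_mset (\<lambda>B. x \<in> B) \<B>) * (k - 1) = lam * (v - 1)"
proof -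
  let ?\<B>\<^sub>x = "filter_mset (\<lambda>B. x \<in> B) \<B>"
  have "(\<Sum>B\<in>#?\<B>\<^sub>x. card (B \<inter> (V - {x}))) = (\<Sum>y\<in>V - {x}. size (filter_mset (\<lambda>B. y \<in> B) ?\<B>\<^sub>x))"
    using assms(1) by (intro sum_mset_card_Int_eq_sum_size_filter) (simp add: two_design_def)
  also have "\<dots> = (\<Sum>y\<in>V - {x}. lam)"
    using assms by (intro sum.cong) (auto simp: two_design_def filter_filter_mset)
  also have "\<dots> = lam * (v - 1)"
    using assms by (simp add: two_design_def)
  finally have "(\<Sum>B\<in>#?\<B>\<^sub>x. card (B \<inter> (V - {x}))) = lam * (v - 1)" .
  moreover have "(\<Sum>B\<in>#?\<B>\<^sub>x. card (B \<inter> (V - {x}))) = (\<Sum>B\<in>#?\<B>\<^sub>x. k - 1)"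
  proof (rule arg_cong[where f = sum_mset], rule image_mset_cong)
    fix B
    assume "B \<in># ?\<B>\<^sub>x"
    then have "B \<subseteq> V" "card B = k" "x \<in> B"
      using assms(1) by (auto simp: two_design_def)
    then have "B \<inter> (V - {x}) = B - {x}"
      by auto
    then show "card (B \<inter> (V - {x})) = k - 1"
      using \<open>card B = k\<close> \<open>x \<in> B\<close> by simp
  qed
  ultimately show ?thesis
    by simp
qed

lemma two_design_block_size_ge_2:
  assumes "two_design V \<B> v k lam"
  shows "k \<ge> 2"
proof (rule ccontr)
  assume "\<not> k \<ge> 2"
  obtain x where "x \<in> V"
    using two_design_points_nonempty[OF assms] by blast
  with assms \<open>\<not> k \<ge> 2\<close> have "lam * (v - 1) = 0"
    using two_design_replication by fastforce
  with assms show False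
    by (simp add: two_design_def)
qed

lemma two_design_replication_eq:
  assumes "two_design V \<B> v k lam" and "x \<in> V" and "y \<in> V"
  shows "size (filter_mset (\<lambda>B. x \<in> B) \<B>) = size (filter_mset (\<lambda>B. y \<in> B) \<B>)"
proof -
  have "k - 1 \<noteq> 0"
    using two_design_block_size_ge_2[OF assms(1)] by simp
  then show ?thesis
    using two_design_replication[OF assms(1,2)] two_design_replication[OF assms(1,3)]
    by (metis mult_right_cancel)
qed

lemma two_design_sum_card_Int:
  assumes "two_design V \<B> v k lam" and "X \<subseteq> V" and "x \<in> V"
  shows "(\<Sum>B\<in>#\<B>. card (B \<inter> X)) = card X * size (filter_mset (\<lambda>B. x \<in> B) \<B>)"
proof -
  have "finite X"
    using assms(1,2) finite_subset by (auto simp: two_design_def)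
  then have "(\<Sum>B\<in>#\<B>. card (B \<inter> X)) = (\<Sum>y\<in>X. size (filter_mset (\<lambda>B. y \<in> B) \<B>))"
    by (rule sum_mset_card_Int_eq_sum_size_filter)
  also have "\<dots> = (\<Sum>y\<in>X. size (filter_mset (\<lambda>B. x \<in> B) \<B>))"
    using assms by (intro sum.cong) (auto intro: two_design_replication_eq)
  finally show ?thesis
    by simp
qed

lemma two_design_sum_card_Int_pairs:
  assumes "two_design V \<B> v k lam" and "X \<subseteq> V"
  shows "(\<Sum>B\<in>#\<B>. card (B \<inter> X) * (card (B \<inter> X) - 1)) = lam * (card X * (card X - 1))"
proof -
  define P where "P = {p \<in> X \<times> X. fst p \<noteq> snd p}"
  have "finite X"
    using assms finite_subset by (auto simp: two_design_def)
  then have "finite P"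
    by (simp add: P_def)
  have "card (B \<times> B \<inter> P) = card (B \<inter> X) * (card (B \<inter> X) - 1)" for B
  proof -
    have "B \<times> B \<inter> P = {p \<in> (B \<inter> X) \<times> (B \<inter> X). fst p \<noteq> snd p}"
      by (auto simp: P_def)
    then show ?thesis
      using \<open>finite X\<close> by (simp add: card_off_diagonal)
  qed
  then have "(\<Sum>B\<in>#\<B>. card (B \<inter> X) * (card (B \<inter> X) - 1)) = (\<Sum>B\<in>#\<B>. card (B \<times> B \<inter> P))"
    by simp
  also have "\<dots> = (\<Sum>p\<in>P. size (filter_mset (\<lambda>B. p \<in> B \<times> B) \<B>))"
    using \<open>finite P\<close> by (rule sum_mset_card_Int_eq_sum_size_filter)
  also have "\<dots> = (\<Sum>p\<in>P. lam)"
  proof (rule sum.cong)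
    fix p
    assume "p \<in> P"
    then obtain a b where "p = (a, b)" "a \<in> V" "b \<in> V" "a \<noteq> b"
      using assms(2) by (force simp: P_def)
    then show "size (filter_mset (\<lambda>B. p \<in> B \<times> B) \<B>) = lam"
      using assms(1) by (simp add: two_design_def)
  qed simp
  also have "\<dots> = lam * (card X * (card X - 1))"
    using \<open>finite X\<close> by (simp add: P_def card_off_diagonal)
  finally show ?thesis .
qed

text \<open>Double counting all incidences gives v r = v k.\<close>
lemma symmetric_design_replication:
  assumes "symmetric_design V \<B> v k lam" and "x \<in> V"
  shows "size (filter_mset (\<lambda>B. x \<in> B) \<B>) = k"
proof -
  have design: "two_design V \<B> v k lam" and "size \<B> = v" "card V = v" "v \<ge> 2"
    using assms(1) by (auto simp: symmetric_design_def two_design_def)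
  have "(\<Sum>B\<in>#\<B>. card (B \<inter> V)) = v * k"
    using design \<open>size \<B> = v\<close> by (simp add: two_design_def Int_absorb2 cong: image_mset_cong)
  moreover have "(\<Sum>B\<in>#\<B>. card (B \<inter> V)) = v * size (filter_mset (\<lambda>B. x \<in> B) \<B>)"
    using two_design_sum_card_Int[OF design _ assms(2)] \<open>card V = v\<close> by simp
  ultimately show ?thesis
    using \<open>v \<ge> 2\<close> by simp
qed

lemma symmetric_design_lambda_less_block_size:
  assumes "symmetric_design V \<B> v k lam" and "k < v"
  shows "lam < k"
proof -
  have design: "two_design V \<B> v k lam"
    using assms(1) by (simp add: symmetric_design_def)
  obtain x where "x \<in> V"
    using two_design_points_nonempty[OF design] by blast
  have "lam * k \<le> lam * (v - 1)"
    using assms(2) by (intro mult_le_mono2) linarith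
  also have "\<dots> = k * (k - 1)"
    using two_design_replication[OF design \<open>x \<in> V\<close>]
      symmetric_design_replication[OF assms(1) \<open>x \<in> V\<close>] by simp
  also have "\<dots> < k * k"
    using two_design_block_size_ge_2[OF design] by simp
  finally show ?thesis
    by simp
qed

theorem lemma2p1:
  fixes V :: "'a set" and \<B> :: "'a set multiset" and v k lam :: nat and X :: "'a set"
  assumes "symmetric_design V \<B> v k lam"
    and "k < v"
    and "X \<subseteq> V" and "card X = k"
  shows "\<exists>B \<in># \<B>. card (B \<inter> X) \<ge> lam + 1"
proof (rule ccontr)
  assume "\<not> ?thesis"
  then have small: "\<And>B. B \<in># \<B> \<Longrightarrow> card (B \<inter> X) \<le> lam"
    by force
  have design: "two_design V \<B> v k lam"
    using assms(1) by (simp add: symmetric_design_def)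
  obtain x where "x \<in> V"
    using two_design_points_nonempty[OF design] by blast
  have first: "(\<Sum>B\<in>#\<B>. card (B \<inter> X)) = k * k"
    using two_design_sum_card_Int[OF design assms(3) \<open>x \<in> V\<close>]
      symmetric_design_replication[OF assms(1) \<open>x \<in> V\<close>] assms(4) by simp
  have "lam * (k * (k - 1)) \<le> k * k * (lam - 1)"
    using sum_mset_pairs_le[of \<B> "\<lambda>B. card (B \<inter> X)", OF small]
      two_design_sum_card_Int_pairs[OF design assms(3)] first assms(4) by simp
  then have "int (lam * (k * (k - 1))) \<le> int (k * k * (lam - 1))"
    by (simp only: of_nat_le_iff)
  moreover have "k \<ge> 2" "lam \<ge> 1"
    using two_design_block_size_ge_2[OF design] design by (auto simp: two_design_def)
  ultimately have "int k * (int k * int lam - int lam) \<le> int k * (int k * int lam - int k)"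
    by (simp add: of_nat_diff algebra_simps)
  then have "k \<le> lam"
    using \<open>k \<ge> 2\<close> by (simp add: mult_le_cancel_left)
  with symmetric_design_lambda_less_block_size[OF assms(1,2)] show False
    by simp
qed

end
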